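(* Let $(M_n,S_n)_{n\ge0}$ be a Markov random walk with irreducible positive recurrent driving chain on a countable set $\mathcal S$. If $\liminf_{n\to\infty}S_n$ or $\limsup_{n\to\infty}S_n$ is $\mathbb P_i$-a.s. finite for some $i\in\mathcal S$, then $(M_n,S_n)_{n\ge0}$ is null-homologous.
   Context: $\mathcal S$ is countable and $(M_n)_{n\ge0}$ is an irreducible positive recurrent Markov chain on $\mathcal S$ with stationary distribution $\pi=(\pi_i)_{i\in\mathcal S}$. A Markov random walk (MRW) $(M_n,S_n)_{n\ge0}$ with driving chain $(M_n)$ has $S_0=0$, $S_n=X_1+\dots+X_n$, where conditionally on $(M_n)_{n\ge0}$ the $X_n$ are independent real random variables and, for a stochastic kernel $K$ from $\mathcal S^2$ to $\mathbb R$, $\mathbb P((X_1,\dots,X_n)\in\cdot\mid M_0=i_0,\dots,M_n=i_n)=K_{i_0i_1}\otimes\cdots\otimes K_{i_{n-1}i_n}$ for all $n$ and states. $\mathbb P_i:=\mathbb P(\cdot\mid M_0=i)$, $\mathbb P_\pi:=\sum_i\pi_i\mathbb P_i$. The MRW is null-homologous if there is a function $g:\mathcal S\to\mathbb R$ such that $X_n=g(M_n)-g(M_{n-1})$ $\mathbb P_\pi$-a.s. for all $n\ge1$. *)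

theory Defs
  imports "HOL-Probability.Probability"
begin

definition stochastic_matrix :: "('a \<Rightarrow> 'a \<Rightarrow> real) \<Rightarrow> bool" where
  "stochastic_matrix p \<longleftrightarrow> (\<forall>i j. 0 \<le> p i j) \<and> (\<forall>i. (p i has_sum 1) UNIV)"

fun pstep :: "('a \<Rightarrow> 'a \<Rightarrow> real) \<Rightarrow> nat \<Rightarrow> 'a \<Rightarrow> 'a \<Rightarrow> real" where
  "pstep p 0 i j = (if i = j then 1 else 0)"
| "pstep p (Suc n) i j = (\<Sum>\<^sub>\<infinity>k. pstep p n i k * p k j)"

definition irreducible_matrix :: "('a \<Rightarrow> 'a \<Rightarrow> real) \<Rightarrow> bool" where
  "irreducible_matrix p \<longleftrightarrow> (\<forall>i j. \<exists>n. pstep p n i j > 0)"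

definition stationary_distribution :: "('a \<Rightarrow> 'a \<Rightarrow> real) \<Rightarrow> ('a \<Rightarrow> real) \<Rightarrow> bool" where
  "stationary_distribution p \<pi> \<longleftrightarrow> (\<forall>i. 0 \<le> \<pi> i) \<and> (\<pi> has_sum 1) UNIV \<and>
     (\<forall>j. ((\<lambda>i. \<pi> i * p i j) has_sum \<pi> j) UNIV)"

definition return_time :: "(nat \<Rightarrow> 'b \<Rightarrow> 'a) \<Rightarrow> 'a \<Rightarrow> 'b \<Rightarrow> ennreal" where
  "return_time M i \<omega> = (if \<exists>n>0. M n \<omega> = i
      then ennreal (real (LEAST n. n > 0 \<and> M n \<omega> = i)) else \<infinity>)"

definition psum :: "(nat \<Rightarrow> 'b \<Rightarrow> real) \<Rightarrow> nat \<Rightarrow> 'b \<Rightarrow> real" where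
  "psum X n \<omega> = (\<Sum>k\<in>{1..n}. X k \<omega>)"

text \<open>Markov random walk: Pm i is the law P_i (on a common measurable space), M the driving
  chain with transition matrix p, X the increments (X 0 unused), K the stochastic kernel
  from S^2 to the real line. The defining property fixes all finite-dimensional distributions
  of (M_0,...,M_n,X_1,...,X_n) under P_i.\<close>
definition MRW :: "('a \<Rightarrow> 'a \<Rightarrow> real) \<Rightarrow> ('a \<Rightarrow> 'a \<Rightarrow> real measure)
    \<Rightarrow> (nat \<Rightarrow> 'b \<Rightarrow> 'a) \<Rightarrow> (nat \<Rightarrow> 'b \<Rightarrow> real) \<Rightarrow> ('a \<Rightarrow> 'b measure) \<Rightarrow> bool" where
  "MRW p K M X Pm \<longleftrightarrow>
     stochastic_matrix p \<and>
     (\<forall>i j. prob_space (K i j) \<and> sets (K i j) = sets borel) \<and>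
     (\<forall>i. prob_space (Pm i)) \<and>
     (\<forall>i j. sets (Pm i) = sets (Pm j)) \<and>
     (\<forall>i n. M n \<in> measurable (Pm i) (count_space UNIV)) \<and>
     (\<forall>i n. X n \<in> borel_measurable (Pm i)) \<and>
     (\<forall>i n (is :: nat \<Rightarrow> 'a) (B :: nat \<Rightarrow> real set). (\<forall>k. B k \<in> sets borel) \<longrightarrow>
        measure (Pm i) {\<omega> \<in> space (Pm i). (\<forall>k\<le>n. M k \<omega> = is k) \<and> (\<forall>k\<in>{1..n}. X k \<omega> \<in> B k)}
        = (if is 0 = i then 1 else 0) *
          (\<Prod>k\<in>{1..n}. p (is (k - 1)) (is k) * measure (K (is (k - 1)) (is k)) (B k)))"

definition positive_recurrent :: "(nat \<Rightarrow> 'b \<Rightarrow> 'a) \<Rightarrow> ('a \<Rightarrow> 'b measure) \<Rightarrow> bool" where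
  "positive_recurrent M Pm \<longleftrightarrow> (\<forall>i. (\<integral>\<^sup>+ \<omega>. return_time M i \<omega> \<partial>Pm i) < \<infinity>)"

definition Ppi :: "('a \<Rightarrow> real) \<Rightarrow> ('a \<Rightarrow> 'b measure) \<Rightarrow> 'b measure" where
  "Ppi \<pi> Pm = measure_of (space (Pm undefined)) (sets (Pm undefined))
      (\<lambda>A. \<integral>\<^sup>+ i. ennreal (\<pi> i) * emeasure (Pm i) A \<partial>count_space UNIV)"

definition null_homologous :: "('a \<Rightarrow> real) \<Rightarrow> ('a \<Rightarrow> 'b measure)
    \<Rightarrow> (nat \<Rightarrow> 'b \<Rightarrow> 'a) \<Rightarrow> (nat \<Rightarrow> 'b \<Rightarrow> real) \<Rightarrow> bool" where
  "null_homologous \<pi> Pm M X \<longleftrightarrow> (\<exists>g :: 'a \<Rightarrow> real. \<forall>n\<ge>1.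
      AE \<omega> in Ppi \<pi> Pm. X n \<omega> = g (M n \<omega>) - g (M (n - 1) \<omega>))"

end

theory Submission
  imports Defs
begin

text \<open>Let \<open>L\<close> be \<open>liminf S\<^sub>n\<close> (or \<open>limsup S\<^sub>n\<close>). Since \<open>L = X\<^sub>1 + L \<circ> shift\<close>, the probabilities
  \<open>P\<^sub>k(|L| < \<infinity>)\<close> form a harmonic function bounded by 1 which equals 1 at one state, so by
  irreducibility \<open>L\<close> is a.s. finite under every \<open>P\<^sub>k\<close>. Conditioning on the first step, the
  characteristic functions \<open>\<phi>\<^sub>k\<close> of \<open>L\<close> under \<open>P\<^sub>k\<close> satisfy
  \<open>\<phi>\<^sub>j = \<Sum>\<^sub>k p\<^sub>j\<^sub>k \<psi>\<^sub>j\<^sub>k \<phi>\<^sub>k\<close>, where \<open>\<psi>\<^sub>j\<^sub>k\<close> is the characteristic function of \<open>K\<^sub>j\<^sub>k\<close>.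
  Thus \<open>|\<phi>|\<close> is a bounded subharmonic function, and integrating against the positive stationary
  distribution shows that it is harmonic. Equality in the triangle inequality then forces
  \<open>|\<psi>\<^sub>j\<^sub>k(t)| = 1\<close> and \<open>\<psi>\<^sub>j\<^sub>k(t) sgn \<phi>\<^sub>k(t) = sgn \<phi>\<^sub>j(t)\<close> for all small \<open>t > 0\<close>
  (where \<open>\<phi> \<noteq> 0\<close>). The first identity makes \<open>K\<^sub>j\<^sub>k\<close> a point mass \<open>\<delta>\<^sub>c\<close>; by the second,
  \<open>e\<^sup>i\<^sup>t\<^sup>c\<close> transports the phase of \<open>\<phi>\<close> along every edge, so the phases relative to a fixed
  state define a potential \<open>g\<close> with \<open>c = g\<^sub>k - g\<^sub>j\<close>.\<close>

section \<open>Complex numbers, series and characteristic functions\<close>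

lemma complex_eq_of_real_if_norm_le_Re:
  fixes z :: complex
  assumes "norm z \<le> r" and "Re z = r"
  shows "z = complex_of_real r"
proof -
  have "(Re z)\<^sup>2 + (Im z)\<^sup>2 \<le> r\<^sup>2"
    using assms(1) norm_ge_zero[of z] by (simp add: power_mono flip: cmod_power2)
  then have "Im z = 0" using assms(2) by simp
  then show ?thesis using assms(2) by (simp add: complex_eq_iff)
qed

lemma iexp_eq_1_imp_eq_0:
  fixes t d :: real
  assumes t: "0 < t" and small: "t * \<bar>d\<bar> < 2 * pi" and "iexp (t * d) = 1"
  shows "d = 0"
proof -
  from assms(3) obtain n :: int where "t * d = 2 * of_int n * pi"
    unfolding exp_eq_1 by auto
  then have "t * \<bar>d\<bar> = 2 * \<bar>of_int n\<bar> * pi"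
    using t by (metis abs_mult abs_of_pos abs_of_nonneg pi_ge_zero zero_le_numeral)
  with small have "n = 0" by (auto simp: mult_less_cancel_right)
  with \<open>t * \<bar>d\<bar> = _\<close> t show ?thesis by simp
qed

lemma has_sum_diff:
  fixes f g :: "'a \<Rightarrow> 'b::topological_ab_group_add"
  assumes "(f has_sum a) A" and "(g has_sum b) A"
  shows "((\<lambda>x. f x - g x) has_sum (a - b)) A"
proof -
  have "((\<lambda>x. - g x) has_sum - b) A" using assms(2) by (simp add: has_sum_uminus)
  from has_sum_add[OF assms(1) this] show ?thesis by simp
qed

lemma has_sum_eq_sgn_if_norm_sum_eq:
  fixes f :: "'i \<Rightarrow> complex"
  assumes f: "(f has_sum s) A" and b: "(b has_sum norm s) A"
    and le: "\<And>k. k \<in> A \<Longrightarrow> norm (f k) \<le> b k" and k: "k \<in> A"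
  shows "f k = complex_of_real (b k) * sgn s"
proof -
  txt \<open>Rotated by \<open>w\<close>, the terms have real parts summing to \<open>norm s\<close>, their common upper bound.\<close>
  define w where "w = cnj (sgn s)"
  have norm_w_le: "norm (w * z) \<le> norm z" for z
    by (cases "s = 0") (simp_all add: w_def norm_mult norm_sgn)
  have "Re (w * s) = norm s"
    unfolding w_def by (cases "s = 0") (simp_all add: sgn_div_norm field_simps cmod_power2[unfolded power2_eq_square])
  moreover have "((\<lambda>k. b k - Re (w * f k)) has_sum (norm s - Re (w * s))) A"
    by (intro has_sum_diff b has_sum_Re has_sum_cmult_right f)
  ultimately have sum0: "((\<lambda>k. b k - Re (w * f k)) has_sum 0) A"
    by simp
  have Re_le: "Re (w * f k) \<le> b k" if "k \<in> A" for k
    using complex_Re_le_cmod[of "w * f k"] norm_w_le[of "f k"] le[OF that] by linarith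
  have "Re (w * f k) = b k"
    using nonneg_has_sum_le_0D[OF sum0 order_refl _ k] Re_le by force
  then have wf: "w * f k = complex_of_real (b k)"
    using norm_w_le[of "f k"] le[OF k] by (intro complex_eq_of_real_if_norm_le_Re) auto
  show ?thesis
  proof (cases "s = 0")
    case True
    then show ?thesis using le[OF k] wf by (simp add: w_def)
  next
    case False
    then have "sgn s * w = 1"
      using complex_norm_square[of "sgn s"] by (simp add: w_def norm_sgn)
    then show ?thesis using wf by (metis mult.assoc mult.commute mult_1)
  qed
qed

lemma (in real_distribution) AE_iexp_eq_char_if_norm_char_eq_1:
  assumes "norm (char M t) = 1"
  shows "AE x in M. iexp (t * x) = char M t"
proof -
  define w where "w = cnj (char M t)"
  have w_char: "w * char M t = 1"
    using assms by (simp add: w_def complex_norm_square[symmetric] mult.commute)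
  have intg: "integrable M (\<lambda>x. w * iexp (t * x))"
    by (intro integrable_mult_right integrable_const_bound[where B=1]) auto
  have norm_w: "norm (w * iexp (t * x)) = 1" for x
    using assms by (simp add: w_def norm_mult del: of_real_mult)
  have Re_le_1: "Re (w * iexp (t * x)) \<le> 1" for x
    using complex_Re_le_cmod norm_w by (metis)
  have "(\<integral>x. 1 - Re (w * iexp (t * x)) \<partial>M) = 1 - (\<integral>x. Re (w * iexp (t * x)) \<partial>M)"
    using intg by (simp add: Bochner_Integration.integral_diff integrable_Re prob_space
        del: times_complex.sel space_eq_univ)
  also have "(\<integral>x. Re (w * iexp (t * x)) \<partial>M) = Re (w * char M t)"
    unfolding char_def using intg by (simp add: integral_Re del: times_complex.sel)
  also have "1 - Re (w * char M t) = 0" by (simp add: w_char)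
  finally have "AE x in M. 1 - Re (w * iexp (t * x)) = 0"
    using intg by (subst integral_nonneg_eq_0_iff_AE[symmetric])
      (auto intro!: integrable_Re AE_I2 simp: Re_le_1 simp del: times_complex.sel of_real_mult)
  then show ?thesis
  proof eventually_elim
    case (elim x)
    then have "w * iexp (t * x) = 1"
      using norm_w[of x] by (intro complex_eq_of_real_if_norm_le_Re[where r=1, simplified]) auto
    then show ?case
      using w_char by (metis mult.commute mult.left_neutral mult.assoc)
  qed
qed

lemma (in real_distribution) AE_eq_const_if_norm_char_eq_1:
  assumes "0 < \<delta>" and norm_char: "\<And>t. 0 < t \<Longrightarrow> t < \<delta> \<Longrightarrow> norm (char M t) = 1"
  shows "\<exists>c. AE x in M. x = c"
proof -
  define T where "T = {t \<in> \<rat>. 0 < t \<and> t < \<delta>}"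
  have "countable T" unfolding T_def by (rule countable_subset[OF _ countable_rat]) auto
  then have AE_T: "AE x in M. \<forall>t\<in>T. iexp (t * x) = char M t"
    unfolding AE_ball_countable[OF \<open>countable T\<close>]
    by (intro ballI AE_iexp_eq_char_if_norm_char_eq_1 norm_char) (auto simp: T_def)
  then obtain x0 where x0: "\<forall>t\<in>T. iexp (t * x0) = char M t"
    using AE_False eventually_mono by blast
  have "AE x in M. x = x0"
    using AE_T
  proof eventually_elim
    case (elim x)
    show "x = x0"
    proof (rule ccontr)
      assume "x \<noteq> x0"
      then have "0 < min \<delta> (2 * pi / \<bar>x - x0\<bar>)" using assms(1) by simp
      then obtain t where t: "t \<in> \<rat>" "0 < t" "t < min \<delta> (2 * pi / \<bar>x - x0\<bar>)"
        using Rats_dense_in_real by blast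
      then have "t \<in> T" unfolding T_def by simp
      then have "iexp (t * x) = iexp (t * x0)"
        using elim x0 by simp
      then have "iexp (t * (x - x0)) = 1"
        by (simp add: right_diff_distrib exp_diff)
      moreover have "t * \<bar>x - x0\<bar> < 2 * pi"
        using t \<open>x \<noteq> x0\<close> by (simp add: field_simps)
      ultimately have "x - x0 = 0"
        by (intro iexp_eq_1_imp_eq_0[OF t(2)])
      then show False using \<open>x \<noteq> x0\<close> by simp
    qed
  qed
  then show ?thesis by blast
qed

lemma (in real_distribution) char_eq_iexp_if_AE_eq:
  assumes "AE x in M. x = c"
  shows "char M t = iexp (t * c)"
proof -
  have "char M t = (\<integral>x. iexp (t * c) \<partial>M)"
    unfolding char_def using assms by (intro integral_cong_AE) (auto elim: eventually_mono)
  also have "\<dots> = iexp (t * c)" by (simp add: prob_space del: space_eq_univ)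
  finally show ?thesis .
qed

lemma (in real_distribution) char_nonzero_near_0: "\<exists>\<delta>>0. \<forall>t. \<bar>t\<bar> < \<delta> \<longrightarrow> char M t \<noteq> 0"
proof -
  have "(char M \<longlongrightarrow> 1) (at 0)"
    using isCont_char[of 0] by (simp add: isCont_def char_zero)
  then have "eventually (\<lambda>t. char M t \<noteq> 0) (at 0)"
    by (rule tendsto_imp_eventually_ne) simp
  then obtain \<delta> where "0 < \<delta>" "\<And>t. t \<noteq> 0 \<Longrightarrow> \<bar>t\<bar> < \<delta> \<Longrightarrow> char M t \<noteq> 0"
    unfolding eventually_at by (auto simp: dist_real_def)
  then show ?thesis using char_zero by (metis zero_neq_one)
qed

section \<open>Stochastic matrices\<close>

lemma stochastic_matrix_nonneg: "stochastic_matrix p \<Longrightarrow> 0 \<le> p i j"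
  and stochastic_matrix_has_sum: "stochastic_matrix p \<Longrightarrow> (p i has_sum 1) UNIV"
  unfolding stochastic_matrix_def by auto

lemma pstep_nonneg:
  assumes "stochastic_matrix p"
  shows "0 \<le> pstep p n i j"
  by (induction n arbitrary: j)
    (auto intro!: infsum_nonneg mult_nonneg_nonneg stochastic_matrix_nonneg[OF assms])

lemma pstep_Suc_pos_imp:
  assumes "stochastic_matrix p" and "0 < pstep p (Suc n) i k"
  shows "\<exists>m. 0 < pstep p n i m \<and> 0 < p m k"
proof (rule ccontr)
  assume "\<not> ?thesis"
  then have "\<forall>m. pstep p n i m * p m k = 0"
    using pstep_nonneg[OF assms(1)] stochastic_matrix_nonneg[OF assms(1)]
    by (metis less_eq_real_def mult_eq_0_iff)
  then show False using assms(2) by (simp add: infsum_0)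
qed

lemma irreducible_matrix_induct[consumes 2, case_names base step]:
  assumes "stochastic_matrix p" and "irreducible_matrix p"
    and "P i" and "\<And>j k. P j \<Longrightarrow> 0 < p j k \<Longrightarrow> P k"
  shows "P k"
proof -
  obtain n where "0 < pstep p n i k"
    using assms(2) unfolding irreducible_matrix_def by blast
  then show ?thesis
  proof (induction n arbitrary: k)
    case 0
    then show ?case using assms(3) by (simp split: if_splits)
  next
    case (Suc n)
    then show ?case using pstep_Suc_pos_imp[OF assms(1)] assms(4) by blast
  qed
qed

lemma stochastic_matrix_eq_1_if_mean_eq_1:
  assumes "stochastic_matrix p" and mean: "((\<lambda>k. p j k * a k) has_sum 1) UNIV"
    and le1: "\<And>k. a k \<le> 1" and "0 < p j k"
  shows "a k = 1"
proof -
  have "((\<lambda>k. p j k - p j k * a k) has_sum (1 - 1)) UNIV"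
    by (intro has_sum_diff mean stochastic_matrix_has_sum[OF assms(1)])
  then have "((\<lambda>k. p j k * (1 - a k)) has_sum 0) UNIV"
    by (simp add: algebra_simps)
  then have "p j k * (1 - a k) = 0"
    by (rule nonneg_has_sum_le_0D) (auto intro!: mult_nonneg_nonneg stochastic_matrix_nonneg[OF assms(1)] simp: le1)
  then show ?thesis using \<open>0 < p j k\<close> by simp
qed

lemma stationary_distribution_pos:
  assumes "stochastic_matrix p" and "irreducible_matrix p" and stat: "stationary_distribution p \<pi>"
  shows "0 < \<pi> k"
proof -
  have \<pi>_nonneg: "0 \<le> \<pi> j" and \<pi>_sum: "(\<pi> has_sum 1) UNIV"
    and \<pi>_stat: "((\<lambda>j. \<pi> j * p j k) has_sum \<pi> k) UNIV" for j k
    using stat unfolding stationary_distribution_def by auto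
  obtain i where "0 < \<pi> i"
    using \<pi>_sum \<pi>_nonneg has_sum_0[of UNIV \<pi>] has_sum_unique by (metis less_eq_real_def zero_neq_one)
  from assms(1,2) show ?thesis
  proof (induction k rule: irreducible_matrix_induct[where i=i])
    case base
    show ?case by fact
  next
    case (step j k)
    have "\<pi> j * p j k \<le> \<pi> k"
      using has_sum_mono2[OF has_sum_finite[of "{j}"] \<pi>_stat[of k]] \<pi>_nonneg
        stochastic_matrix_nonneg[OF assms(1)] by auto
    then show ?case using step by (smt (verit) mult_pos_pos)
  qed
qed

lemma stationary_subharmonic_imp_harmonic:
  assumes p: "stochastic_matrix p" and stat: "stationary_distribution p \<pi>"
    and \<pi>_pos: "\<And>j. 0 < \<pi> j" and bounded: "\<And>k. \<bar>u k\<bar> \<le> B"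
    and Pu: "\<And>j. ((\<lambda>k. p j k * u k) has_sum U j) UNIV" and sub: "\<And>j. u j \<le> U j"
  shows "U j = u j"
proof -
  have \<pi>_nonneg: "0 \<le> \<pi> j" and \<pi>_sum: "(\<pi> has_sum 1) UNIV"
    and \<pi>_stat: "((\<lambda>j. \<pi> j * p j k) has_sum \<pi> k) UNIV" for j k
    using stat unfolding stationary_distribution_def by auto
  txt \<open>By Fubini and stationarity both \<open>\<Sum>\<pi>\<^sub>jU\<^sub>j\<close> and \<open>\<Sum>\<pi>\<^sub>ku\<^sub>k\<close> are the sum of \<open>g\<close>.\<close>
  note p_nonneg = stochastic_matrix_nonneg[OF p]
  define g where "g = (\<lambda>(j, k). \<pi> j * p j k * u k)"
  have "(\<lambda>(j, k). \<pi> j * p j k) summable_on UNIV \<times> UNIV"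
    using has_sum_cmult_right[OF stochastic_matrix_has_sum[OF p]] \<pi>_sum \<pi>_nonneg p_nonneg
    by (intro summable_on_SigmaI[where g=\<pi>]) (auto simp: has_sum_imp_summable)
  then have "(\<lambda>x. B * (case x of (j, k) \<Rightarrow> \<pi> j * p j k)) summable_on UNIV \<times> UNIV"
    by (rule summable_on_cmult_right)
  then have "(\<lambda>x. norm (g x)) summable_on UNIV \<times> UNIV"
  proof (rule summable_on_comparison_test, goal_cases)
    case (1 x)
    obtain j k where x: "x = (j, k)" by fastforce
    have "norm (g x) = (\<pi> j * p j k) * \<bar>u k\<bar>"
      by (simp add: x g_def abs_mult \<pi>_nonneg p_nonneg)
    also have "\<dots> \<le> (\<pi> j * p j k) * B"
      by (intro mult_left_mono bounded) (simp add: \<pi>_nonneg p_nonneg)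
    finally show ?case by (simp add: x mult.commute)
  qed simp_all
  then have "g summable_on UNIV \<times> UNIV"
    by (rule abs_summable_summable)
  then obtain S where g: "(g has_sum S) (UNIV \<times> UNIV)"
    unfolding summable_on_def by blast
  have "((\<lambda>j. \<pi> j * U j) has_sum S) UNIV"
    by (rule has_sum_Sigma'[OF g])
      (simp add: g_def mult.assoc has_sum_cmult_right[OF Pu])
  moreover have "((\<lambda>k. \<pi> k * u k) has_sum S) UNIV"
  proof (rule has_sum_Sigma')
    show "((\<lambda>(k, j). g (j, k)) has_sum S) (UNIV \<times> UNIV)"
      using g by (subst (asm) has_sum_swap) simp
    show "((\<lambda>j. case (k, j) of (k, j) \<Rightarrow> g (j, k)) has_sum \<pi> k * u k) UNIV" for k
      unfolding g_def using has_sum_cmult_left[OF \<pi>_stat[of k], of "u k"] by simp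
  qed
  ultimately have "((\<lambda>j. \<pi> j * U j - \<pi> j * u j) has_sum (S - S)) UNIV"
    by (rule has_sum_diff)
  then have "((\<lambda>j. \<pi> j * (U j - u j)) has_sum 0) UNIV"
    by (simp add: right_diff_distrib)
  then have "\<pi> j * (U j - u j) = 0"
    by (rule nonneg_has_sum_le_0D) (auto simp: \<pi>_nonneg sub)
  then show ?thesis using \<pi>_pos[of j] by simp
qed

lemma (in finite_measure) finite_measure_density_const:
  "c \<noteq> \<infinity> \<Longrightarrow> finite_measure (density M (\<lambda>_. c))"
  by (intro finite_measureI) (simp add: emeasure_density_const ennreal_mult_eq_top_iff)

lemma integral_pair_measure_mult:
  fixes f :: "'a \<Rightarrow> 'c::{real_normed_field, banach, second_countable_topology}" and g :: "'b \<Rightarrow> 'c"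
  assumes "finite_measure M1" and "finite_measure M2"
    and [measurable]: "f \<in> borel_measurable M1" "g \<in> borel_measurable M2"
    and "\<And>x. norm (f x) \<le> B" and "\<And>y. norm (g y) \<le> B'"
  shows "(\<integral>z. f (fst z) * g (snd z) \<partial>(M1 \<Otimes>\<^sub>M M2)) = (\<integral>x. f x \<partial>M1) * (\<integral>y. g y \<partial>M2)"
proof -
  interpret M1: finite_measure M1 by fact
  interpret M2: finite_measure M2 by fact
  interpret pair_sigma_finite M1 M2 ..
  interpret M12: finite_measure "M1 \<Otimes>\<^sub>M M2" by (rule finite_measure_pair_measure) fact+
  have "integrable (M1 \<Otimes>\<^sub>M M2) (\<lambda>z. f (fst z) * g (snd z))"
    using assms(5,6) by (intro M12.integrable_const_bound[where B="B * B'"])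
      (auto simp: norm_mult intro: mult_mono order_trans[OF norm_ge_zero])
  from integral_fst'[OF this, symmetric] show ?thesis
    by simp
qed

context prob_space
begin

lemma integral_indicator_scaleR_finite_partition:
  fixes f :: "'a \<Rightarrow> 'i" and Z :: "'a \<Rightarrow> 'c::{banach, second_countable_topology}"
  assumes [measurable]: "f \<in> measurable M (count_space UNIV)" "Z \<in> borel_measurable M"
    and bounded: "\<And>\<omega>. norm (Z \<omega>) \<le> B" and "finite F"
  shows "(\<Sum>k\<in>F. \<integral>\<omega>. indicator {\<omega> \<in> space M. f \<omega> = k} \<omega> *\<^sub>R Z \<omega> \<partial>M)
    = (\<integral>\<omega>. indicator {\<omega> \<in> space M. f \<omega> \<in> F} \<omega> *\<^sub>R Z \<omega> \<partial>M)"
proof -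
  have "(\<Sum>k\<in>F. indicator {\<omega> \<in> space M. f \<omega> = k} \<omega>) = (indicator {\<omega> \<in> space M. f \<omega> \<in> F} \<omega> :: real)"
    for \<omega> using \<open>finite F\<close> by (auto simp: indicator_def sum.delta)
  moreover have "integrable M (\<lambda>\<omega>. indicator {\<omega> \<in> space M. f \<omega> = k} \<omega> *\<^sub>R Z \<omega>)" for k
    using bounded by (intro integrable_const_bound[where B=B]) (auto simp: indicator_def intro: order_trans[OF _ bounded])
  ultimately show ?thesis
    by (simp add: Bochner_Integration.integral_sum[symmetric] scaleR_sum_left[symmetric])
qed

lemma has_sum_integral_partition:
  fixes f :: "'a \<Rightarrow> 'i" and Z :: "'a \<Rightarrow> 'c::{banach, second_countable_topology}"
  assumes [measurable]: "f \<in> measurable M (count_space UNIV)" "Z \<in> borel_measurable M"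
    and bounded: "\<And>\<omega>. norm (Z \<omega>) \<le> B"
    and total: "((\<lambda>k. prob {\<omega> \<in> space M. f \<omega> = k}) has_sum 1) UNIV"
  shows "((\<lambda>k. \<integral>\<omega>. indicator {\<omega> \<in> space M. f \<omega> = k} \<omega> *\<^sub>R Z \<omega> \<partial>M) has_sum (\<integral>\<omega>. Z \<omega> \<partial>M)) UNIV"
proof -
  define J where "J F = {\<omega> \<in> space M. f \<omega> \<in> F}" for F
  have [measurable]: "J F \<in> sets M" for F
    using measurable_sets[OF assms(1), of F] by (simp add: J_def vimage_def Int_def conj_commute)
  have "0 \<le> B" using bounded[of undefined] norm_ge_zero order_trans by blast
  have prob_J: "prob (J F) = (\<Sum>k\<in>F. prob {\<omega> \<in> space M. f \<omega> = k})" if "finite F" for F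
    using integral_indicator_scaleR_finite_partition[of f "\<lambda>_. 1::real" 1 F] that
    by (simp add: J_def Int_absorb2 sets.sets_into_space)
  have tail: "norm ((\<integral>\<omega>. indicator (J F) \<omega> *\<^sub>R Z \<omega> \<partial>M) - (\<integral>\<omega>. Z \<omega> \<partial>M)) \<le> B * (1 - prob (J F))" for F
  proof -
    have "(\<integral>\<omega>. indicator (J F) \<omega> *\<^sub>R Z \<omega> \<partial>M) - (\<integral>\<omega>. Z \<omega> \<partial>M) = (\<integral>\<omega>. indicator (J F) \<omega> *\<^sub>R Z \<omega> - Z \<omega> \<partial>M)"
      using bounded by (intro Bochner_Integration.integral_diff[symmetric] integrable_const_bound[where B=B])
        (auto simp: indicator_def \<open>0 \<le> B\<close>)
    also have "norm \<dots> \<le> (\<integral>\<omega>. norm (indicator (J F) \<omega> *\<^sub>R Z \<omega> - Z \<omega>) \<partial>M)"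
      by (rule integral_norm_bound)
    also have "\<dots> \<le> (\<integral>\<omega>. B * indicator (space M - J F) \<omega> \<partial>M)"
      using bounded \<open>0 \<le> B\<close>
      by (intro integral_mono integrable_const_bound[where B=B]) (auto simp: indicator_def)
    also have "\<dots> = B * (1 - prob (J F))"
      by (simp add: prob_compl)
    finally show ?thesis .
  qed
  have "((\<lambda>F. (\<integral>\<omega>. indicator (J F) \<omega> *\<^sub>R Z \<omega> \<partial>M) - (\<integral>\<omega>. Z \<omega> \<partial>M)) \<longlongrightarrow> 0) (finite_subsets_at_top UNIV)"
  proof (rule Lim_null_comparison)
    show "eventually (\<lambda>F. norm ((\<integral>\<omega>. indicator (J F) \<omega> *\<^sub>R Z \<omega> \<partial>M) - (\<integral>\<omega>. Z \<omega> \<partial>M)) \<le> B * (1 - prob (J F)))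
        (finite_subsets_at_top UNIV)"
      using tail by simp
    have "((\<lambda>F. prob (J F)) \<longlongrightarrow> 1) (finite_subsets_at_top UNIV)"
      using total unfolding has_sum_def
      by (rule Lim_transform_eventually) (auto simp: prob_J eventually_finite_subsets_at_top_weakI)
    then show "((\<lambda>F. B * (1 - prob (J F))) \<longlongrightarrow> 0) (finite_subsets_at_top UNIV)"
      by (auto intro!: tendsto_eq_intros)
  qed
  then show ?thesis
    unfolding has_sum_def
    by (rule Lim_transform_eventually[OF LIM_zero_cancel])
      (intro eventually_finite_subsets_at_top_weakI,
        simp add: J_def integral_indicator_scaleR_finite_partition[OF assms(1,2) bounded])
qed

end

section \<open>The path space\<close>

text \<open>A path is the sequence \<open>(M\<^sub>n, X\<^sub>n)\<^sub>n\<close>; the component \<open>X\<^sub>0\<close> is never constrained.\<close>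

definition path_cylinder :: "nat \<Rightarrow> (nat \<Rightarrow> 'a) \<Rightarrow> (nat \<Rightarrow> real set) \<Rightarrow> (nat \<Rightarrow> 'a \<times> real) set" where
  "path_cylinder n is B = {s. (\<forall>k\<le>n. fst (s k) = is k) \<and> (\<forall>k\<in>{1..n}. snd (s k) \<in> B k)}"

definition path_cylinders :: "(nat \<Rightarrow> 'a \<times> real) set set" where
  "path_cylinders = {path_cylinder n is B | n is B. \<forall>k. B k \<in> sets borel}"

definition path_space :: "(nat \<Rightarrow> 'a \<times> real) measure" where
  "path_space = sigma UNIV path_cylinders"

lemma space_path_space[simp]: "space path_space = UNIV"
  unfolding path_space_def by simp

lemma sets_path_space: "sets path_space = sigma_sets UNIV path_cylinders"
  unfolding path_space_def by simp

lemma path_cylinder_in_path_cylinders: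
  "(\<And>k. B k \<in> sets borel) \<Longrightarrow> path_cylinder n is B \<in> path_cylinders"
  unfolding path_cylinders_def by blast

lemma path_cylinder_Int:
  assumes "\<forall>k\<le>min n1 n2. is1 k = is2 k"
  shows "path_cylinder n1 is1 B1 \<inter> path_cylinder n2 is2 B2
    = path_cylinder (max n1 n2) (\<lambda>k. if k \<le> n1 then is1 k else is2 k)
        (\<lambda>k. (if k \<le> n1 then B1 k else UNIV) \<inter> (if k \<le> n2 then B2 k else UNIV))"
  using assms unfolding path_cylinder_def by (auto simp: le_max_iff_disj)

lemma Int_stable_path_cylinders: "Int_stable (path_cylinders :: (nat \<Rightarrow> 'a \<times> real) set set)"
proof (rule Int_stableI)
  fix a b :: "(nat \<Rightarrow> 'a \<times> real) set"
  assume "a \<in> path_cylinders" "b \<in> path_cylinders"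
  then obtain n1 is1 B1 n2 is2 B2 where a: "a = path_cylinder n1 is1 B1" "\<forall>k. B1 k \<in> sets borel"
    and b: "b = path_cylinder n2 is2 B2" "\<forall>k. B2 k \<in> sets borel"
    unfolding path_cylinders_def by blast
  show "a \<inter> b \<in> path_cylinders"
  proof (cases "\<forall>k\<le>min n1 n2. is1 k = is2 k")
    case True
    show ?thesis
      unfolding a(1) b(1) path_cylinder_Int[OF True]
      using a(2) b(2) by (intro path_cylinder_in_path_cylinders) auto
  next
    case False
    then have "a \<inter> b = {}"
      unfolding a b path_cylinder_def by auto
    also have "{} = path_cylinder 1 is1 (\<lambda>_. {})"
      unfolding path_cylinder_def by auto
    finally show ?thesis
      by (simp add: path_cylinder_in_path_cylinders)
  qed
qed

lemma path_cylinder_in_sets: "(\<And>k. B k \<in> sets borel) \<Longrightarrow> path_cylinder n is B \<in> sets path_space"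
  unfolding sets_path_space by (intro sigma_sets.Basic path_cylinder_in_path_cylinders)

lemma measurable_snd_path_space: "1 \<le> m \<Longrightarrow> (\<lambda>s. snd (s m)) \<in> borel_measurable (path_space :: (nat \<Rightarrow> 'a::countable \<times> real) measure)"
proof (rule borel_measurableI)
  fix S :: "real set" assume "open S" "1 \<le> m"
  then have S: "S \<in> sets borel" by auto
  have "(\<lambda>s::nat \<Rightarrow> 'a \<times> real. snd (s m)) -` S \<inter> space path_space =
     (\<Union>l\<in>{l::'a list. length l = Suc m}. path_cylinder m (\<lambda>k. l ! k) (\<lambda>k. if k = m then S else UNIV))"
  proof (intro equalityI subsetI)
    fix s :: "nat \<Rightarrow> 'a \<times> real" assume "s \<in> (\<lambda>s. snd (s m)) -` S \<inter> space path_space"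
    then show "s \<in> (\<Union>l\<in>{l::'a list. length l = Suc m}. path_cylinder m (\<lambda>k. l ! k) (\<lambda>k. if k = m then S else UNIV))"
      using \<open>1 \<le> m\<close> by (intro UN_I[of "map (\<lambda>k. fst (s k)) [0..<Suc m]"]) (auto simp: path_cylinder_def nth_map simp del: upt_Suc)
  next
    fix s :: "nat \<Rightarrow> 'a \<times> real"
    assume "s \<in> (\<Union>l\<in>{l::'a list. length l = Suc m}. path_cylinder m (\<lambda>k. l ! k) (\<lambda>k. if k = m then S else UNIV))"
    then have "\<forall>k\<in>{1..m}. snd (s k) \<in> (if k = m then S else UNIV)" unfolding path_cylinder_def by blast
    then have "snd (s m) \<in> S" using \<open>1 \<le> m\<close> by (metis atLeastAtMost_iff order_refl)
    then show "s \<in> (\<lambda>s. snd (s m)) -` S \<inter> space path_space" by simp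
  qed
  also have "\<dots> \<in> sets path_space"
    by (intro sets.countable_UN'' path_cylinder_in_sets) (auto simp: S intro: countableI_type)
  finally show "(\<lambda>s::nat \<Rightarrow> 'a \<times> real. snd (s m)) -` S \<inter> space path_space \<in> sets path_space" .
qed

definition trajectory :: "(nat \<Rightarrow> 'b \<Rightarrow> 'a) \<Rightarrow> (nat \<Rightarrow> 'b \<Rightarrow> real) \<Rightarrow> nat \<Rightarrow> 'b \<Rightarrow> nat \<Rightarrow> 'a \<times> real"
  where "trajectory M X d \<omega> = (\<lambda>n. (M (n + d) \<omega>, X (n + d) \<omega>))"

lemma all_le_Suc_iff: "(\<forall>m\<le>Suc n. P m) \<longleftrightarrow> P 0 \<and> (\<forall>m\<le>n. P (Suc m))"
  by (metis Suc_le_mono le0 not0_implies_Suc)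

lemma all_atLeastAtMost_1_Suc_iff: "(\<forall>m\<in>{1..Suc n}. P m) \<longleftrightarrow> P 1 \<and> (\<forall>m\<in>{1..n}. P (Suc m))"
proof -
  have "{1..Suc n} = insert 1 (Suc ` {1..n})"
  proof (intro equalityI subsetI)
    fix x assume "x \<in> {1..Suc n}"
    then show "x \<in> insert 1 (Suc ` {1..n})"
      by (cases x) (auto simp: image_iff)
  qed auto
  then show ?thesis unfolding \<open>{1..Suc n} = _\<close> by blast
qed

section \<open>The first-step decomposition of a Markov random walk\<close>

locale markov_random_walk =
  fixes p :: "'a::countable \<Rightarrow> 'a \<Rightarrow> real" and K :: "'a \<Rightarrow> 'a \<Rightarrow> real measure"
    and M :: "nat \<Rightarrow> 'b \<Rightarrow> 'a" and X :: "nat \<Rightarrow> 'b \<Rightarrow> real" and Pm :: "'a \<Rightarrow> 'b measure"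
  assumes MRW: "MRW p K M X Pm"
begin

lemma stochastic: "stochastic_matrix p"
  and prob_space_K: "prob_space (K i j)"
  and sets_K: "sets (K i j) = sets borel"
  and prob_space_Pm: "prob_space (Pm i)"
  and sets_Pm_eq: "sets (Pm i) = sets (Pm j)"
  and measurable_M[measurable]: "M n \<in> measurable (Pm i) (count_space UNIV)"
  and measurable_X[measurable]: "X n \<in> borel_measurable (Pm i)"
  using MRW unfolding MRW_def by auto

lemma measure_cylinder_event:
  assumes "\<And>k. B k \<in> sets borel"
  shows "measure (Pm i) {\<omega> \<in> space (Pm i). (\<forall>k\<le>n. M k \<omega> = is k) \<and> (\<forall>k\<in>{1..n}. X k \<omega> \<in> B k)}
        = (if is 0 = i then 1 else 0) *
          (\<Prod>k\<in>{1..n}. p (is (k - 1)) (is k) * measure (K (is (k - 1)) (is k)) (B k))"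
  using MRW assms unfolding MRW_def by blast

lemma p_nonneg: "0 \<le> p i j"
  and p_has_sum: "(p i has_sum 1) UNIV"
  using stochastic by (auto simp: stochastic_matrix_def)

lemma space_Pm_eq: "space (Pm i) = space (Pm j)"
  using sets_Pm_eq by (rule sets_eq_imp_space_eq)

lemma space_K[simp]: "space (K i j) = UNIV"
  using sets_eq_imp_space_eq[OF sets_K[of i j]] by simp

lemma real_distribution_K: "real_distribution (K j k)"
  unfolding real_distribution_def real_distribution_axioms_def using prob_space_K sets_K by auto

lemma cylinder_event_in_sets:
  assumes [measurable]: "\<And>k. B k \<in> sets borel"
  shows "{\<omega> \<in> space (Pm i). (\<forall>k\<le>n. M k \<omega> = is k) \<and> (\<forall>k\<in>{1..n}. X k \<omega> \<in> B k)} \<in> sets (Pm i)"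
  by measurable

lemma AE_M0_eq: "AE \<omega> in Pm i. M 0 \<omega> = i"
proof -
  have "measure (Pm i) {\<omega> \<in> space (Pm i). M 0 \<omega> = i} = 1"
    using measure_cylinder_event[of "\<lambda>_. UNIV" i 0 "\<lambda>_. i"] by simp
  then have "AE \<omega> in Pm i. \<omega> \<in> {\<omega> \<in> space (Pm i). M 0 \<omega> = i}"
    by (rule prob_space.AE_prob_1[OF prob_space_Pm])
  then show ?thesis by eventually_elim auto
qed

lemma measurable_trajectory[measurable]: "trajectory M X d \<in> measurable (Pm i) path_space"
  unfolding path_space_def
proof (rule measurable_measure_of)
  fix C :: "(nat \<Rightarrow> 'a \<times> real) set" assume "C \<in> path_cylinders"
  then obtain n "is" B where C: "C = path_cylinder n is B" and B[measurable]: "\<And>k. B k \<in> sets borel"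
    unfolding path_cylinders_def by blast
  have "trajectory M X d -` C \<inter> space (Pm i)
    = {\<omega> \<in> space (Pm i). (\<forall>k\<le>n. M (k + d) \<omega> = is k) \<and> (\<forall>k\<in>{1..n}. X (k + d) \<omega> \<in> B k)}"
    unfolding C path_cylinder_def trajectory_def by auto
  also have "\<dots> \<in> sets (Pm i)" by measurable
  finally show "trajectory M X d -` C \<inter> space (Pm i) \<in> sets (Pm i)" .
qed auto

lemma emeasure_first_step_cylinder:
  assumes A: "A \<in> sets borel" and B: "\<And>m. B m \<in> sets borel"
  shows "emeasure (Pm j) {\<omega>\<in>space (Pm j). M 1 \<omega> = k \<and> X 1 \<omega> \<in> A \<and>
           (\<forall>m\<le>n. M (Suc m) \<omega> = is m) \<and> (\<forall>m\<in>{1..n}. X (Suc m) \<omega> \<in> B m)}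
       = ennreal (p j k * measure (K j k) A) *
         emeasure (Pm k) {\<omega>\<in>space (Pm k). (\<forall>m\<le>n. M m \<omega> = is m) \<and> (\<forall>m\<in>{1..n}. X m \<omega> \<in> B m)}"
proof -
  interpret Pj: prob_space "Pm j" by (rule prob_space_Pm)
  interpret Pk: prob_space "Pm k" by (rule prob_space_Pm)
  define PR where "PR = (\<Prod>m\<in>{1..n}. p (is (m - 1)) (is m) * measure (K (is (m - 1)) (is m)) (B m))"
  have PRnn: "0 \<le> PR" unfolding PR_def by (intro prod_nonneg) (auto intro: mult_nonneg_nonneg p_nonneg)
  have rhs: "emeasure (Pm k) {\<omega>\<in>space (Pm k). (\<forall>m\<le>n. M m \<omega> = is m) \<and> (\<forall>m\<in>{1..n}. X m \<omega> \<in> B m)}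
     = ennreal ((if is 0 = k then 1 else 0) * PR)"
    unfolding PR_def
    by (subst Pk.emeasure_eq_measure, subst measure_cylinder_event[OF B]) simp
  show ?thesis
  proof (cases "is 0 = k")
    case False
    then have emp: "{\<omega>\<in>space (Pm j). M 1 \<omega> = k \<and> X 1 \<omega> \<in> A \<and>
           (\<forall>m\<le>n. M (Suc m) \<omega> = is m) \<and> (\<forall>m\<in>{1..n}. X (Suc m) \<omega> \<in> B m)} = {}"
      using False by (auto dest!: spec[where x=0])
    show ?thesis using False rhs by (simp only: emp) simp
  next
    case True
    define is' where "is' = (\<lambda>m. case m of 0 \<Rightarrow> j | Suc m' \<Rightarrow> is m')"
    define B' where "B' = (\<lambda>m. if m = 1 then A else B (m - 1))"
    have B': "\<And>m. B' m \<in> sets borel" unfolding B'_def using A B by auto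
    let ?L = "{\<omega>\<in>space (Pm j). M 1 \<omega> = k \<and> X 1 \<omega> \<in> A \<and>
           (\<forall>m\<le>n. M (Suc m) \<omega> = is m) \<and> (\<forall>m\<in>{1..n}. X (Suc m) \<omega> \<in> B m)}"
    let ?E = "{\<omega> \<in> space (Pm j). (\<forall>m\<le>Suc n. M m \<omega> = is' m) \<and> (\<forall>m\<in>{1..Suc n}. X m \<omega> \<in> B' m)}"
    have Lsets: "?L \<in> sets (Pm j)"
    proof -
      have [measurable]: "A \<in> sets borel" "\<And>m. B m \<in> sets borel" by (fact A, fact B)
      show ?thesis by measurable
    qed
    have "AE \<omega> in Pm j. \<omega> \<in> ?L \<longleftrightarrow> \<omega> \<in> ?E"
      using AE_M0_eq[of j]
    proof eventually_elim
      case (elim \<omega>)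
      have "(\<forall>m\<le>Suc n. M m \<omega> = is' m) \<longleftrightarrow> M 0 \<omega> = j \<and> (\<forall>m\<le>n. M (Suc m) \<omega> = is m)"
        unfolding all_le_Suc_iff is'_def by simp
      moreover have "(\<forall>m\<in>{1..Suc n}. X m \<omega> \<in> B' m) \<longleftrightarrow> X 1 \<omega> \<in> A \<and> (\<forall>m\<in>{1..n}. X (Suc m) \<omega> \<in> B m)"
        unfolding all_atLeastAtMost_1_Suc_iff B'_def by simp
      ultimately show ?case using elim True by auto
    qed
    then have "emeasure (Pm j) ?L = emeasure (Pm j) ?E"
      by (intro emeasure_eq_AE Lsets cylinder_event_in_sets B')
    also have "\<dots> = ennreal (measure (Pm j) ?E)"
      by (simp add: Pj.emeasure_eq_measure)
    also have "measure (Pm j) ?E = (\<Prod>m\<in>{1..Suc n}. p (is' (m - 1)) (is' m) * measure (K (is' (m - 1)) (is' m)) (B' m))"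
      by (subst measure_cylinder_event[OF B']) (simp add: is'_def)
    also have "\<dots> = (p j k * measure (K j k) A) * PR"
      unfolding PR_def
      by (subst prod.atLeast_Suc_atMost, simp, subst prod.shift_bounds_cl_Suc_ivl)
        (simp add: is'_def B'_def True, intro disjI2 prod.cong refl, auto split: nat.split)
    also have "ennreal (p j k * measure (K j k) A * PR) = ennreal (p j k * measure (K j k) A) * ennreal PR"
      by (rule ennreal_mult) (auto simp: p_nonneg PRnn)
    finally show ?thesis unfolding rhs using True by simp
  qed
qed

lemma emeasure_first_step:
  assumes A[measurable]: "A \<in> sets borel" and C[measurable]: "C \<in> sets path_space"
  shows "emeasure (Pm j) {\<omega>\<in>space (Pm j). M 1 \<omega> = k \<and> X 1 \<omega> \<in> A \<and> trajectory M X 1 \<omega> \<in> C}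
    = ennreal (p j k * measure (K j k) A) * emeasure (Pm k) {\<omega>\<in>space (Pm k). trajectory M X 0 \<omega> \<in> C}"
proof -
  interpret Pj: prob_space "Pm j" by (rule prob_space_Pm)
  define E where "E = {\<omega>\<in>space (Pm j). M 1 \<omega> = k \<and> X 1 \<omega> \<in> A}"
  have [measurable]: "E \<in> sets (Pm j)" unfolding E_def by measurable
  define c where "c = ennreal (p j k * measure (K j k) A)"
  define N1 where "N1 = distr (density (Pm j) (indicator E)) path_space (trajectory M X 1)"
  define N2 where "N2 = density (distr (Pm k) path_space (trajectory M X 0)) (\<lambda>_. c)"
  have N1: "emeasure N1 C' = emeasure (Pm j) {\<omega>\<in>space (Pm j). M 1 \<omega> = k \<and> X 1 \<omega> \<in> A \<and> trajectory M X 1 \<omega> \<in> C'}"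
    if [measurable]: "C' \<in> sets path_space" for C'
    unfolding N1_def by (simp add: emeasure_distr emeasure_restricted) (auto simp: E_def intro: arg_cong[where f="emeasure _"])
  have N2: "emeasure N2 C' = c * emeasure (Pm k) {\<omega>\<in>space (Pm k). trajectory M X 0 \<omega> \<in> C'}"
    if [measurable]: "C' \<in> sets path_space" for C'
    unfolding N2_def by (simp add: emeasure_density_const emeasure_distr vimage_def Int_def conj_commute)
  have "N1 = N2"
  proof (rule measure_eqI_generator_eq[OF Int_stable_path_cylinders,
        where \<Omega>=UNIV and A="\<lambda>i. path_cylinder 0 (\<lambda>_. from_nat i) (\<lambda>_. UNIV)"])
    show "sets N1 = sigma_sets UNIV path_cylinders" "sets N2 = sigma_sets UNIV path_cylinders"
      unfolding N1_def N2_def by (simp_all add: sets_path_space)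
    show "range (\<lambda>i. path_cylinder 0 (\<lambda>_. from_nat i) (\<lambda>_. UNIV)) \<subseteq> path_cylinders"
      by (auto intro: path_cylinder_in_path_cylinders)
    show "(\<Union>i. path_cylinder 0 (\<lambda>_. from_nat i :: 'a) (\<lambda>_. UNIV)) = UNIV"
    proof (intro equalityI subsetI)
      fix s :: "nat \<Rightarrow> 'a \<times> real"
      show "s \<in> (\<Union>i. path_cylinder 0 (\<lambda>_. from_nat i :: 'a) (\<lambda>_. UNIV))"
        unfolding path_cylinder_def by (intro UN_I[of "to_nat (fst (s 0))"]) auto
    qed simp
    show "emeasure N1 (path_cylinder 0 (\<lambda>_. from_nat i) (\<lambda>_. UNIV)) \<noteq> \<infinity>" for i
      by (subst N1[OF path_cylinder_in_sets]) (auto simp: Pj.emeasure_eq_measure)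
    fix C' :: "(nat \<Rightarrow> 'a \<times> real) set" assume "C' \<in> path_cylinders"
    then obtain n "is" B where C': "C' = path_cylinder n is B" and B: "\<And>k. B k \<in> sets borel"
      unfolding path_cylinders_def by blast
    then have "C' \<in> sets path_space" by (simp add: path_cylinder_in_sets)
    then show "emeasure N1 C' = emeasure N2 C'"
      unfolding N1[OF \<open>C' \<in> sets path_space\<close>] N2[OF \<open>C' \<in> sets path_space\<close>] c_def
      using emeasure_first_step_cylinder[of A B j k n "is"] A B
      by (simp add: C' path_cylinder_def trajectory_def)
  qed auto
  then show ?thesis using N1[OF C] N2[OF C] unfolding c_def by simp
qed

lemma measure_M1_eq: "measure (Pm j) {\<omega>\<in>space (Pm j). M 1 \<omega> = k} = p j k"
proof -
  have "emeasure (Pm j) {\<omega>\<in>space (Pm j). M 1 \<omega> = k} = ennreal (p j k)"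
    using emeasure_first_step[of UNIV UNIV j k] sets.top[of path_space]
      prob_space.prob_space[OF prob_space_K] prob_space.emeasure_space_1[OF prob_space_Pm]
    by simp
  then show ?thesis by (simp add: measure_def p_nonneg)
qed

lemma first_step_pair_measure:
  "density (K j k) (\<lambda>_. ennreal (p j k)) \<Otimes>\<^sub>M distr (Pm k) path_space (trajectory M X 0)
   = distr (density (Pm j) (indicator {\<omega>\<in>space (Pm j). M 1 \<omega> = k}))
       (borel \<Otimes>\<^sub>M path_space) (\<lambda>\<omega>. (X 1 \<omega>, trajectory M X 1 \<omega>))" (is "?M1 \<Otimes>\<^sub>M ?M2 = ?N")
proof (rule pair_measure_eqI)
  interpret Kp: prob_space "K j k" by (rule prob_space_K)
  interpret Pk: prob_space "Pm k" by (rule prob_space_Pm)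
  show "sigma_finite_measure ?M1"
    by (intro finite_measure.sigma_finite_measure Kp.finite_measure_density_const) simp
  show "sigma_finite_measure ?M2"
    by (intro finite_measure.sigma_finite_measure prob_space.finite_measure Pk.prob_space_distr) simp
  show "sets (?M1 \<Otimes>\<^sub>M ?M2) = sets ?N"
    by (simp add: sets_K cong: sets_pair_measure_cong)
  fix A B assume "A \<in> sets ?M1" "B \<in> sets ?M2"
  then have A[measurable]: "A \<in> sets borel" and B[measurable]: "B \<in> sets path_space"
    by (simp_all add: sets_K)
  have "emeasure ?N (A \<times> B) = emeasure (Pm j) {\<omega>\<in>space (Pm j). M 1 \<omega> = k \<and> X 1 \<omega> \<in> A \<and> trajectory M X 1 \<omega> \<in> B}"
    by (simp add: emeasure_distr emeasure_restricted) (auto intro: arg_cong[where f="emeasure _"])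
  also have "\<dots> = ennreal (p j k * measure (K j k) A) * emeasure ?M2 B"
    by (subst emeasure_first_step[OF A B]) (simp add: emeasure_distr vimage_def Int_def conj_commute)
  also have "ennreal (p j k * measure (K j k) A) = emeasure ?M1 A"
    using A by (simp add: emeasure_density_const sets_K Kp.emeasure_eq_measure ennreal_mult p_nonneg)
  finally show "emeasure ?M1 A * emeasure ?M2 B = emeasure ?N (A \<times> B)" by simp
qed

lemma integral_first_step:
  fixes f :: "real \<Rightarrow> complex" and F :: "(nat \<Rightarrow> 'a \<times> real) \<Rightarrow> complex"
  assumes [measurable]: "f \<in> borel_measurable borel" "F \<in> borel_measurable path_space"
    and "\<And>x. norm (f x) \<le> 1" and "\<And>s. norm (F s) \<le> 1"
  shows "(\<integral>\<omega>. indicator {\<omega>\<in>space (Pm j). M 1 \<omega> = k} \<omega> *\<^sub>R (f (X 1 \<omega>) * F (trajectory M X 1 \<omega>)) \<partial>Pm j)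
       = p j k * (\<integral>x. f x \<partial>K j k) * (\<integral>\<omega>. F (trajectory M X 0 \<omega>) \<partial>Pm k)"
proof -
  interpret Pk: prob_space "Pm k" by (rule prob_space_Pm)
  interpret Kp: prob_space "K j k" by (rule prob_space_K)
  have [measurable_cong]: "sets (K j k) = sets borel" by (rule sets_K)
  define E where "E = {\<omega>\<in>space (Pm j). M 1 \<omega> = k}"
  have [measurable]: "E \<in> sets (Pm j)" unfolding E_def by measurable
  have "(\<integral>\<omega>. indicator E \<omega> *\<^sub>R (f (X 1 \<omega>) * F (trajectory M X 1 \<omega>)) \<partial>Pm j)
      = (\<integral>\<omega>. f (X 1 \<omega>) * F (trajectory M X 1 \<omega>) \<partial>density (Pm j) (\<lambda>\<omega>. ennreal (indicator E \<omega>)))"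
    by (subst integral_density) auto
  also have "\<dots> = (\<integral>z. f (fst z) * F (snd z) \<partial>distr (density (Pm j) (indicator E)) (borel \<Otimes>\<^sub>M path_space)
          (\<lambda>\<omega>. (X 1 \<omega>, trajectory M X 1 \<omega>)))"
    unfolding ennreal_indicator by (subst integral_distr) auto
  also have "\<dots> = (\<integral>z. f (fst z) * F (snd z)
      \<partial>(density (K j k) (\<lambda>_. ennreal (p j k)) \<Otimes>\<^sub>M distr (Pm k) path_space (trajectory M X 0)))"
    unfolding E_def first_step_pair_measure ..
  also have "\<dots> = (\<integral>x. f x \<partial>density (K j k) (\<lambda>_. ennreal (p j k))) * (\<integral>s. F s \<partial>distr (Pm k) path_space (trajectory M X 0))"
    by (rule integral_pair_measure_mult[where B=1 and B'=1])
      (auto intro!: Kp.finite_measure_density_const Pk.finite_measure_distr simp: assms(3,4))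
  also have "\<dots> = p j k * (\<integral>x. f x \<partial>K j k) * (\<integral>\<omega>. F (trajectory M X 0 \<omega>) \<partial>Pm k)"
    by (simp add: integral_density integral_distr p_nonneg scaleR_conv_of_real)
  finally show ?thesis unfolding E_def .
qed

lemma has_sum_first_step:
  fixes f :: "real \<Rightarrow> complex" and F :: "(nat \<Rightarrow> 'a \<times> real) \<Rightarrow> complex"
  assumes [measurable]: "f \<in> borel_measurable borel" "F \<in> borel_measurable path_space"
    and "\<And>x. norm (f x) \<le> 1" and "\<And>s. norm (F s) \<le> 1"
  shows "((\<lambda>k. p j k * (\<integral>x. f x \<partial>K j k) * (\<integral>\<omega>. F (trajectory M X 0 \<omega>) \<partial>Pm k)) has_sum
      (\<integral>\<omega>. f (X 1 \<omega>) * F (trajectory M X 1 \<omega>) \<partial>Pm j)) UNIV"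
proof -
  have total: "((\<lambda>k. measure (Pm j) {\<omega>\<in>space (Pm j). M 1 \<omega> = k}) has_sum 1) UNIV"
    unfolding measure_M1_eq by (rule p_has_sum)
  have "((\<lambda>k. \<integral>\<omega>. indicator {\<omega>\<in>space (Pm j). M 1 \<omega> = k} \<omega> *\<^sub>R (f (X 1 \<omega>) * F (trajectory M X 1 \<omega>)) \<partial>Pm j)
      has_sum (\<integral>\<omega>. f (X 1 \<omega>) * F (trajectory M X 1 \<omega>) \<partial>Pm j)) UNIV"
    using assms(3,4)
    by (intro prob_space.has_sum_integral_partition[OF prob_space_Pm _ _ _ total, where B=1])
      (auto simp: norm_mult mult_le_one)
  then show ?thesis
    unfolding integral_first_step[OF assms] .
qed

lemma AE_Ppi_if_AE_Pm:
  assumes [measurable]: "Measurable.pred (Pm i) P" and AE: "\<And>j. AE \<omega> in Pm j. P \<omega>"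
  shows "AE \<omega> in Ppi \<pi> Pm. P \<omega>"
proof -
  define N where "N = {\<omega> \<in> space (Pm i). \<not> P \<omega>}"
  have "N \<in> sets (Pm i)" unfolding N_def by measurable
  then have N_sets: "N \<in> sets (Pm j)" for j
    using sets_Pm_eq[of i j] by simp
  have "emeasure (Pm j) N = 0" for j
    using AE[of j] N_sets[of j] space_Pm_eq[of i j] by (simp add: AE_iff_measurable[OF _ refl] N_def)
  moreover have "sets (Ppi \<pi> Pm) = sets (Pm undefined)"
    unfolding Ppi_def using sets.space_closed[of "Pm undefined"]
    by (simp add: sets_measure_of_conv sets.sigma_sets_eq)
  ultimately have "N \<in> null_sets (Ppi \<pi> Pm)"
    using N_sets by (simp add: null_sets_def Ppi_def emeasure_measure_of_conv)
  moreover have "space (Ppi \<pi> Pm) = space (Pm i)"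
    using space_Pm_eq[of undefined i] by (simp add: Ppi_def space_measure_of_conv)
  ultimately show ?thesis
    using AE_I'[of N "Ppi \<pi> Pm" P] by (auto simp: N_def)
qed

end

definition limit_functional :: "((nat \<Rightarrow> ereal) \<Rightarrow> ereal) \<Rightarrow> bool" where
  "limit_functional Lf \<longleftrightarrow> Lf = liminf \<or> Lf = limsup"

lemma limit_functional_shift:
  "limit_functional Lf \<Longrightarrow> Lf (\<lambda>n. s (Suc n)) = Lf s"
  unfolding limit_functional_def using liminf_shift[of s] limsup_shift[of s] by auto

lemma limit_functional_add_const:
  "limit_functional Lf \<Longrightarrow> Lf (\<lambda>n. ereal c + s n) = ereal c + Lf s"
  unfolding limit_functional_def
  using Liminf_add_ereal_left[of sequentially "ereal c" s] Limsup_add_ereal_left[of sequentially "ereal c" s]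
  by auto

lemma abs_ereal_add_eq_infinity_iff: "\<bar>ereal c + e\<bar> = \<infinity> \<longleftrightarrow> \<bar>e\<bar> = \<infinity>"
  by (cases e) auto

definition path_limit :: "((nat \<Rightarrow> ereal) \<Rightarrow> ereal) \<Rightarrow> (nat \<Rightarrow> 'a \<times> real) \<Rightarrow> ereal" where
  "path_limit Lf s = Lf (\<lambda>n. ereal (\<Sum>m\<in>{1..n}. snd (s m)))"

lemma measurable_path_limit:
  assumes "limit_functional Lf"
  shows "path_limit Lf \<in> borel_measurable (path_space :: (nat \<Rightarrow> 'a::countable \<times> real) measure)"
  using assms unfolding limit_functional_def path_limit_def
  by (auto intro!: borel_measurable_liminf borel_measurable_limsup borel_measurable_ereal
      borel_measurable_sum measurable_snd_path_space)

lemma path_limit_trajectory_0: "path_limit Lf (trajectory M X 0 \<omega>) = Lf (\<lambda>n. ereal (psum X n \<omega>))"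
  unfolding path_limit_def trajectory_def psum_def by simp

lemma path_limit_trajectory_shift:
  assumes "limit_functional Lf"
  shows "path_limit Lf (trajectory M X 0 \<omega>) = ereal (X 1 \<omega>) + path_limit Lf (trajectory M X 1 \<omega>)"
proof -
  have "(\<Sum>m\<in>{1..Suc n}. X m \<omega>) = X 1 \<omega> + (\<Sum>m\<in>{1..n}. X (m + 1) \<omega>)" for n
  proof -
    have "(\<Sum>m\<in>{1..Suc n}. X m \<omega>) = X 1 \<omega> + (\<Sum>m\<in>{Suc 1..Suc n}. X m \<omega>)"
      by (subst sum.atLeast_Suc_atMost) auto
    then show ?thesis by (subst (asm) sum.shift_bounds_cl_Suc_ivl) simp
  qed
  then have "path_limit Lf (trajectory M X 0 \<omega>) = Lf (\<lambda>n. ereal (X 1 \<omega>) + ereal (\<Sum>m\<in>{1..n}. X (m + 1) \<omega>))"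
    using limit_functional_shift[OF assms, of "\<lambda>n. ereal (\<Sum>m\<in>{1..n}. X m \<omega>)"]
    by (simp add: path_limit_def trajectory_def)
  also have "\<dots> = ereal (X 1 \<omega>) + Lf (\<lambda>n. ereal (\<Sum>m\<in>{1..n}. X (m + 1) \<omega>))"
    by (rule limit_functional_add_const[OF assms])
  finally show ?thesis
    by (simp add: path_limit_def trajectory_def)
qed

locale mrw_finite_limit = markov_random_walk +
  fixes Lf :: "(nat \<Rightarrow> ereal) \<Rightarrow> ereal" and \<pi> :: "'a::countable \<Rightarrow> real" and i :: 'a
  assumes limit_functional: "limit_functional Lf"
    and irreducible: "irreducible_matrix p"
    and stationary: "stationary_distribution p \<pi>"
    and AE_finite_at_i: "AE \<omega> in Pm i. \<bar>Lf (\<lambda>n. ereal (psum X n \<omega>))\<bar> \<noteq> \<infinity>"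
begin

abbreviation L :: "'b \<Rightarrow> ereal" where
  "L \<omega> \<equiv> path_limit Lf (trajectory M X 0 \<omega>)"

lemma measurable_path_limit_Lf[measurable]:
  "(path_limit Lf :: (nat \<Rightarrow> 'a \<times> real) \<Rightarrow> ereal) \<in> borel_measurable path_space"
  by (rule measurable_path_limit[OF limit_functional])

definition prob_finite_limit :: "'a \<Rightarrow> real" where
  "prob_finite_limit k = measure (Pm k) {\<omega> \<in> space (Pm k). \<bar>L \<omega>\<bar> \<noteq> \<infinity>}"

lemma prob_finite_limit_harmonic:
  "((\<lambda>k. p j k * prob_finite_limit k) has_sum prob_finite_limit j) UNIV"
proof -
  define F :: "(nat \<Rightarrow> 'a \<times> real) \<Rightarrow> complex"
    where "F s = complex_of_real (indicator {s. \<bar>path_limit Lf s\<bar> \<noteq> \<infinity>} s)" for s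
  have [measurable]: "F \<in> borel_measurable path_space"
    unfolding F_def by measurable
  have integral_F: "(\<integral>\<omega>. F (trajectory M X d \<omega>) \<partial>Pm k)
      = measure (Pm k) {\<omega> \<in> space (Pm k). \<bar>path_limit Lf (trajectory M X d \<omega>)\<bar> \<noteq> \<infinity>}" for d k
  proof -
    have "(\<lambda>\<omega>. F (trajectory M X d \<omega>))
        = (\<lambda>\<omega>. complex_of_real (indicator {\<omega>. \<bar>path_limit Lf (trajectory M X d \<omega>)\<bar> \<noteq> \<infinity>} \<omega>))"
      by (auto simp: F_def indicator_def)
    then show ?thesis by (simp add: Collect_conj_eq Int_commute)
  qed
  have "{\<omega> \<in> space (Pm j). \<bar>path_limit Lf (trajectory M X 1 \<omega>)\<bar> \<noteq> \<infinity>}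
      = {\<omega> \<in> space (Pm j). \<bar>L \<omega>\<bar> \<noteq> \<infinity>}"
    by (simp add: path_limit_trajectory_shift[OF limit_functional] abs_ereal_add_eq_infinity_iff)
  moreover have "((\<lambda>k. p j k * (\<integral>x. (1::complex) \<partial>K j k) * (\<integral>\<omega>. F (trajectory M X 0 \<omega>) \<partial>Pm k)) has_sum
      (\<integral>\<omega>. 1 * F (trajectory M X 1 \<omega>) \<partial>Pm j)) UNIV"
    by (rule has_sum_first_step) (auto simp: F_def)
  ultimately show ?thesis
    using prob_space.prob_space[OF prob_space_K]
    by (simp add: integral_F prob_finite_limit_def has_sum_of_real_iff flip: of_real_mult)
qed

lemma AE_finite_limit: "AE \<omega> in Pm k. \<bar>L \<omega>\<bar> \<noteq> \<infinity>"
proof -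
  have finite_events: "{\<omega> \<in> space (Pm k). \<bar>L \<omega>\<bar> \<noteq> \<infinity>} \<in> sets (Pm k)" for k
    by measurable
  have AE_iff: "(AE \<omega> in Pm k. \<bar>L \<omega>\<bar> \<noteq> \<infinity>) \<longleftrightarrow> prob_finite_limit k = 1" for k
    unfolding prob_finite_limit_def
    by (rule prob_space.prob_Collect_eq_1[OF prob_space_Pm finite_events, symmetric])
  from stochastic irreducible have "prob_finite_limit k = 1"
  proof (induction k rule: irreducible_matrix_induct[where i=i])
    case base
    show ?case using AE_finite_at_i AE_iff by (simp add: path_limit_trajectory_0)
  next
    case (step j k)
    then show ?case
      using prob_finite_limit_harmonic[of j] prob_space.prob_le_1[OF prob_space_Pm]
      by (intro stochastic_matrix_eq_1_if_mean_eq_1[OF stochastic]) (auto simp: prob_finite_limit_def)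
  qed
  then show ?thesis using AE_iff by simp
qed

definition limit_distribution :: "'a \<Rightarrow> real measure" where
  "limit_distribution k = distr (Pm k) borel (\<lambda>\<omega>. real_of_ereal (L \<omega>))"

lemma real_distribution_limit: "real_distribution (limit_distribution k)"
  unfolding limit_distribution_def
  by (rule prob_space.real_distribution_distr[OF prob_space_Pm]) measurable

abbreviation limit_char :: "'a \<Rightarrow> real \<Rightarrow> complex" where
  "limit_char k t \<equiv> char (limit_distribution k) t"

lemma limit_char_first_step:
  "((\<lambda>k. p j k * char (K j k) t * limit_char k t) has_sum limit_char j t) UNIV"
proof -
  define F :: "(nat \<Rightarrow> 'a \<times> real) \<Rightarrow> complex"
    where "F s = iexp (t * real_of_ereal (path_limit Lf s))" for s
  have integral_F: "(\<integral>\<omega>. F (trajectory M X 0 \<omega>) \<partial>Pm k) = limit_char k t" for k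
    unfolding F_def limit_distribution_def char_def by (subst integral_distr) auto
  have "AE \<omega> in Pm j. F (trajectory M X 0 \<omega>) = iexp (t * X 1 \<omega>) * F (trajectory M X 1 \<omega>)"
    using AE_finite_limit[of j]
  proof eventually_elim
    case (elim \<omega>)
    then obtain r where "path_limit Lf (trajectory M X 1 \<omega>) = ereal r"
      by (cases "path_limit Lf (trajectory M X 1 \<omega>)")
        (auto simp: path_limit_trajectory_shift[OF limit_functional])
    then show ?case
      by (simp add: F_def path_limit_trajectory_shift[OF limit_functional] distrib_left exp_add
          flip: exp_add)
  qed
  then have "(\<integral>\<omega>. iexp (t * X 1 \<omega>) * F (trajectory M X 1 \<omega>) \<partial>Pm j) = limit_char j t"
    unfolding integral_F[symmetric] F_def by (intro integral_cong_AE) (auto elim: eventually_mono)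
  moreover have "((\<lambda>k. p j k * char (K j k) t * limit_char k t) has_sum
      (\<integral>\<omega>. iexp (t * X 1 \<omega>) * F (trajectory M X 1 \<omega>) \<partial>Pm j)) UNIV"
  proof (rule has_sum_first_step[of "\<lambda>x. iexp (t * x)" F j, unfolded integral_F char_def[symmetric]])
    show "F \<in> borel_measurable path_space" unfolding F_def by measurable
  qed (auto simp: F_def simp del: of_real_mult)
  ultimately show ?thesis by simp
qed

lemma norm_limit_char_le_1: "norm (limit_char k t) \<le> 1"
  by (rule real_distribution.cmod_char_le_1[OF real_distribution_limit])

lemma norm_first_step_term_le:
  "norm (p j k * char (K j k) t * limit_char k t) \<le> p j k * norm (limit_char k t)"
proof -
  have "norm (p j k * char (K j k) t * limit_char k t)
      = p j k * (norm (char (K j k) t) * norm (limit_char k t))"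
    by (simp add: norm_mult abs_of_nonneg p_nonneg)
  also have "\<dots> \<le> p j k * norm (limit_char k t)"
    using real_distribution.cmod_char_le_1[OF real_distribution_K, of j k t]
    by (intro mult_left_mono mult_left_le_one_le) (auto simp: p_nonneg)
  finally show ?thesis .
qed

lemma norm_limit_char_harmonic:
  "((\<lambda>k. p j k * norm (limit_char k t)) has_sum norm (limit_char j t)) UNIV"
proof -
  define u where "u k = norm (limit_char k t)" for k
  have u_bounded: "\<bar>u k\<bar> \<le> 1" for k
    using norm_limit_char_le_1 by (simp add: u_def)
  have "(\<lambda>k. p j k * u k) summable_on UNIV" for j
    by (rule summable_on_comparison_test[OF has_sum_imp_summable[OF p_has_sum[of j]]])
      (use p_nonneg u_bounded in \<open>auto simp: u_def intro: mult_left_le\<close>)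
  then obtain U where U: "((\<lambda>k. p j k * u k) has_sum U j) UNIV" for j
    unfolding summable_on_def by metis
  have norm_term: "norm (p j k * char (K j k) t * limit_char k t) \<le> p j k * u k" for j k
    unfolding u_def by (rule norm_first_step_term_le)
  have "u j \<le> U j" for j
  proof -
    have "(\<lambda>k. norm (p j k * char (K j k) t * limit_char k t)) summable_on UNIV"
      by (rule summable_on_comparison_test[OF has_sum_imp_summable[OF U[of j]] norm_term]) simp
    then obtain N where N: "((\<lambda>k. norm (p j k * char (K j k) t * limit_char k t)) has_sum N) UNIV"
      unfolding summable_on_def by blast
    have "u j \<le> N"
      unfolding u_def by (rule norm_has_sum_bound[OF N limit_char_first_step])
    also have "N \<le> U j"
      by (rule has_sum_mono[OF N U norm_term])
    finally show ?thesis .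
  qed
  then have "U j = u j"
    using stationary_subharmonic_imp_harmonic[OF stochastic stationary
        stationary_distribution_pos[OF stochastic irreducible stationary] u_bounded U] by blast
  then show ?thesis using U[of j] by (simp add: u_def)
qed

lemma limit_char_phase_step:
  assumes "0 < p j k" and "limit_char j t \<noteq> 0" and "limit_char k t \<noteq> 0"
  shows "norm (char (K j k) t) = 1"
    and "char (K j k) t * sgn (limit_char k t) = sgn (limit_char j t)"
proof -
  have "p j k * char (K j k) t * limit_char k t
      = complex_of_real (p j k * norm (limit_char k t)) * sgn (limit_char j t)"
    by (intro has_sum_eq_sgn_if_norm_sum_eq[OF limit_char_first_step norm_limit_char_harmonic]
        norm_first_step_term_le UNIV_I)
  then have eq: "char (K j k) t * limit_char k t = norm (limit_char k t) * sgn (limit_char j t)"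
    using assms(1) by (simp add: mult.assoc)
  then have "norm (char (K j k) t) * norm (limit_char k t) = norm (limit_char k t)"
    using assms(2) by (metis norm_mult norm_of_real abs_norm_cancel norm_sgn mult.right_neutral)
  then show "norm (char (K j k) t) = 1"
    using assms(3) by simp
  have "char (K j k) t * sgn (limit_char k t) = char (K j k) t * limit_char k t / norm (limit_char k t)"
    by (simp add: sgn_div_norm scaleR_conv_of_real divide_inverse mult_ac)
  also have "\<dots> = sgn (limit_char j t)"
    using eq assms(3) by simp
  finally show "char (K j k) t * sgn (limit_char k t) = sgn (limit_char j t)" .
qed

text \<open>The sign of \<open>\<phi>\<^sub>k\<close> near \<open>0\<close>, compared with that of \<open>\<phi>\<^sub>i\<close>, determines a potential \<open>G\<close>
  at \<open>k\<close>; along an edge \<open>j \<rightarrow> k\<close> with \<open>K\<^sub>j\<^sub>k = \<delta>\<^sub>c\<close> it changes by \<open>c\<close>.\<close>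

definition phase_potential :: "'a \<Rightarrow> real \<Rightarrow> bool" where
  "phase_potential k G \<longleftrightarrow> (\<exists>\<delta>>0. \<forall>t. 0 < t \<longrightarrow> t < \<delta> \<longrightarrow>
     limit_char k t \<noteq> 0 \<and> iexp (t * G) * sgn (limit_char k t) = sgn (limit_char i t))"

lemma phase_potential_step:
  assumes "0 < p j k" and "phase_potential j G"
  obtains c where "AE x in K j k. x = c" and "phase_potential k (G + c)"
proof -
  obtain \<delta>j where \<delta>j: "0 < \<delta>j" "\<And>t. 0 < t \<Longrightarrow> t < \<delta>j \<Longrightarrow>
      limit_char j t \<noteq> 0 \<and> iexp (t * G) * sgn (limit_char j t) = sgn (limit_char i t)"
    using assms(2) unfolding phase_potential_def by blast
  obtain \<delta>k where \<delta>k: "0 < \<delta>k" "\<And>t. \<bar>t\<bar> < \<delta>k \<Longrightarrow> limit_char k t \<noteq> 0"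
    using real_distribution.char_nonzero_near_0[OF real_distribution_limit] by blast
  define \<delta> where "\<delta> = min \<delta>j \<delta>k"
  have \<delta>: "0 < \<delta>" using \<delta>j \<delta>k by (simp add: \<delta>_def)
  have nonzero: "limit_char j t \<noteq> 0" "limit_char k t \<noteq> 0" if "0 < t" "t < \<delta>" for t
    using that \<delta>j \<delta>k by (auto simp: \<delta>_def)
  obtain c where c: "AE x in K j k. x = c"
    using real_distribution.AE_eq_const_if_norm_char_eq_1[OF real_distribution_K \<delta>]
      limit_char_phase_step(1)[OF assms(1) nonzero] by blast
  have "phase_potential k (G + c)"
    unfolding phase_potential_def
  proof (intro exI[of _ \<delta>] conjI allI impI \<delta>)
    fix t assume t: "0 < t" "t < \<delta>"
    show "limit_char k t \<noteq> 0" using nonzero[OF t] by simp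
    have "iexp (t * (G + c)) * sgn (limit_char k t)
        = iexp (t * G) * (char (K j k) t * sgn (limit_char k t))"
      using real_distribution.char_eq_iexp_if_AE_eq[OF real_distribution_K c]
      by (simp add: distrib_left exp_add mult_ac)
    also have "\<dots> = sgn (limit_char i t)"
      using limit_char_phase_step(2)[OF assms(1) nonzero[OF t]] \<delta>j(2)[of t] t by (simp add: \<delta>_def)
    finally show "iexp (t * (G + c)) * sgn (limit_char k t) = sgn (limit_char i t)" .
  qed
  with c show ?thesis by (rule that)
qed

lemma phase_potential_exists: "\<exists>G. phase_potential k G"
proof -
  obtain \<delta> where "0 < \<delta>" "\<And>t. \<bar>t\<bar> < \<delta> \<Longrightarrow> limit_char i t \<noteq> 0"
    using real_distribution.char_nonzero_near_0[OF real_distribution_limit] by blast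
  then have "phase_potential i 0"
    unfolding phase_potential_def by (intro exI[of _ \<delta>]) auto
  from stochastic irreducible show ?thesis
  proof (induction k rule: irreducible_matrix_induct[where i=i])
    case base
    show ?case using \<open>phase_potential i 0\<close> by blast
  next
    case (step j k)
    then show ?case using phase_potential_step by metis
  qed
qed

lemma phase_potential_unique:
  assumes "phase_potential k G" and "phase_potential k G'"
  shows "G = G'"
proof -
  obtain \<delta> where \<delta>: "0 < \<delta>" "\<And>t. 0 < t \<Longrightarrow> t < \<delta> \<Longrightarrow>
      limit_char k t \<noteq> 0 \<and> iexp (t * G) * sgn (limit_char k t) = sgn (limit_char i t)"
    using assms(1) unfolding phase_potential_def by blast
  obtain \<delta>' where \<delta>': "0 < \<delta>'" "\<And>t. 0 < t \<Longrightarrow> t < \<delta>' \<Longrightarrow>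
      iexp (t * G') * sgn (limit_char k t) = sgn (limit_char i t)"
    using assms(2) unfolding phase_potential_def by blast
  define m where "m = min (min \<delta> \<delta>') (1 / (\<bar>G - G'\<bar> + 1))"
  have "0 < m" "m \<le> \<delta>" "m \<le> \<delta>'" "m \<le> 1 / (\<bar>G - G'\<bar> + 1)"
    using \<delta>(1) \<delta>'(1) by (auto simp: m_def)
  define t where "t = m / 2"
  have t: "0 < t" "t < \<delta>" "t < \<delta>'" "t \<le> 1 / (\<bar>G - G'\<bar> + 1)"
    using \<open>0 < m\<close> \<open>m \<le> \<delta>\<close> \<open>m \<le> \<delta>'\<close> \<open>m \<le> 1 / _\<close> by (auto simp: t_def)
  then have "iexp (t * G) = iexp (t * G')"
    using \<delta>(2)[of t] \<delta>'(2)[of t] by (metis mult_right_cancel sgn_eq_0_iff)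
  then have "iexp (t * (G - G')) = 1"
    by (simp add: right_diff_distrib exp_diff)
  moreover have "t * \<bar>G - G'\<bar> < 2 * pi"
  proof -
    have "t * \<bar>G - G'\<bar> \<le> \<bar>G - G'\<bar> / (\<bar>G - G'\<bar> + 1)"
      using mult_right_mono[OF t(4), of "\<bar>G - G'\<bar>"] by simp
    also have "\<dots> < 1" by simp
    finally show ?thesis using pi_gt3 by simp
  qed
  ultimately have "G - G' = 0"
    by (intro iexp_eq_1_imp_eq_0[OF t(1)])
  then show ?thesis by simp
qed

definition potential :: "'a \<Rightarrow> real" where
  "potential k = (SOME G. phase_potential k G)"

lemma phase_potential_potential: "phase_potential k (potential k)"
  unfolding potential_def using phase_potential_exists by (rule someI_ex)

lemma AE_K_eq_potential_diff:
  assumes "0 < p j k"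
  shows "AE x in K j k. x = potential k - potential j"
proof -
  obtain c where "AE x in K j k. x = c" and "phase_potential k (potential j + c)"
    using phase_potential_step[OF assms phase_potential_potential] .
  moreover have "potential k = potential j + c"
    using phase_potential_unique[OF phase_potential_potential] calculation(2) .
  ultimately show ?thesis by simp
qed

lemma AE_X_eq_potential_diff:
  assumes "1 \<le> n"
  shows "AE \<omega> in Pm j. X n \<omega> = potential (M n \<omega>) - potential (M (n - 1) \<omega>)"
proof -
  define B where "B l k = (if k = n then - {potential (l ! n) - potential (l ! (n - 1))} else UNIV)"
    for l :: "'a list" and k
  have B: "B l k \<in> sets borel" for l k unfolding B_def by auto
  define E where "E l = {\<omega> \<in> space (Pm j). (\<forall>k\<le>n. M k \<omega> = l ! k) \<and> (\<forall>k\<in>{1..n}. X k \<omega> \<in> B l k)}"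
    for l
  have "E l \<in> null_sets (Pm j)" for l
  proof -
    have edge: "p (l ! (n - 1)) (l ! n) * measure (K (l ! (n - 1)) (l ! n)) (B l n) = 0"
    proof (cases "0 < p (l ! (n - 1)) (l ! n)")
      case True
      interpret K: prob_space "K (l ! (n - 1)) (l ! n)" by (rule prob_space_K)
      have "AE x in K (l ! (n - 1)) (l ! n). x \<notin> B l n"
        using AE_K_eq_potential_diff[OF True] by eventually_elim (simp add: B_def)
      then have "measure (K (l ! (n - 1)) (l ! n)) (B l n) = 0"
        using K.prob_eq_0 B[of l n] sets_K by metis
      then show ?thesis by simp
    qed (use p_nonneg[of "l ! (n - 1)" "l ! n"] in simp)
    have "(\<Prod>k\<in>{1..n}. p (l ! (k - 1)) (l ! k) * measure (K (l ! (k - 1)) (l ! k)) (B l k)) = 0"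
      using edge \<open>1 \<le> n\<close> by (intro prod_zero) auto
    then have "measure (Pm j) (E l) = 0"
      unfolding E_def by (subst measure_cylinder_event[OF B]) (simp only: mult_zero_right)
    moreover have "E l \<in> sets (Pm j)"
      unfolding E_def by (rule cylinder_event_in_sets[OF B])
    ultimately show ?thesis
      by (simp add: null_sets_def finite_measure.emeasure_eq_measure[OF prob_space.finite_measure[OF prob_space_Pm]])
  qed
  then have "(\<Union>l\<in>{l :: 'a list. length l = Suc n}. E l) \<in> null_sets (Pm j)"
    by (intro null_sets_UN') (auto intro: countableI_type)
  then show ?thesis
  proof (rule AE_I')
    show "{\<omega> \<in> space (Pm j). X n \<omega> \<noteq> potential (M n \<omega>) - potential (M (n - 1) \<omega>)}
        \<subseteq> (\<Union>l\<in>{l. length l = Suc n}. E l)"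
    proof
      fix \<omega> assume \<omega>: "\<omega> \<in> {\<omega> \<in> space (Pm j). X n \<omega> \<noteq> potential (M n \<omega>) - potential (M (n - 1) \<omega>)}"
      define l where "l = map (\<lambda>k. M k \<omega>) [0..<Suc n]"
      have "k \<le> n \<Longrightarrow> l ! k = M k \<omega>" for k
        unfolding l_def by (simp add: nth_map del: upt_Suc)
      then have "\<omega> \<in> E l"
        using \<omega> \<open>1 \<le> n\<close> by (auto simp: E_def B_def)
      moreover have "length l = Suc n"
        by (simp add: l_def)
      ultimately show "\<omega> \<in> (\<Union>l\<in>{l. length l = Suc n}. E l)"
        by blast
    qed
  qed
qed

end

theorem lemma5p2:
  fixes p :: "'a::countable \<Rightarrow> 'a \<Rightarrow> real"
    and K :: "'a \<Rightarrow> 'a \<Rightarrow> real measure"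
    and M :: "nat \<Rightarrow> 'b \<Rightarrow> 'a" and X :: "nat \<Rightarrow> 'b \<Rightarrow> real"
    and Pm :: "'a \<Rightarrow> 'b measure" and \<pi> :: "'a \<Rightarrow> real"
  assumes "MRW p K M X Pm"
    and "irreducible_matrix p"
    and "positive_recurrent M Pm"
    and "stationary_distribution p \<pi>"
    and "\<exists>i. (AE \<omega> in Pm i. \<bar>liminf (\<lambda>n. ereal (psum X n \<omega>))\<bar> \<noteq> \<infinity>)
           \<or> (AE \<omega> in Pm i. \<bar>limsup (\<lambda>n. ereal (psum X n \<omega>))\<bar> \<noteq> \<infinity>)"
  shows "null_homologous \<pi> Pm M X"
proof -
  obtain i Lf where "limit_functional Lf" and "AE \<omega> in Pm i. \<bar>Lf (\<lambda>n. ereal (psum X n \<omega>))\<bar> \<noteq> \<infinity>"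
    using assms(5) unfolding limit_functional_def by blast
  then interpret mrw_finite_limit p K M X Pm Lf \<pi> i
    using assms(1,2,4) by unfold_locales
  have "AE \<omega> in Ppi \<pi> Pm. X n \<omega> = potential (M n \<omega>) - potential (M (n - 1) \<omega>)" if "1 \<le> n" for n
    by (rule AE_Ppi_if_AE_Pm[where i=i]) (use AE_X_eq_potential_diff[OF that] in auto)
  then show ?thesis
    unfolding null_homologous_def by blast
qed

end
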